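(* Let $R$ be a quotient root system with base $S$ and let $\Phi \subseteq R^+$ be co-closed. Then $\mathrm{span}_{\mathbb{Z}} \Phi = \mathrm{span}_{\mathbb{Z}} \operatorname{supp} \Phi$.
   Context: A quotient root system (QRS) $R$ is the set of non-zero images of a root system $\Delta$ (with base $\Sigma$) under the orthogonal projection of its ambient Euclidean space onto $(\mathrm{span}\,J)^\perp$ for some $J\subsetneq\Sigma$; its base $S$ consists of the images of $\Sigma\setminus J$, and every root is an integer combination of $S$ with all coefficients $\ge0$ (positive roots, $R^+$) or all $\le0$. The support of a root $\alpha$ is the set of $\theta\in S$ with non-zero coefficient in $\alpha$; $\operatorname{supp}\Phi$ is the union of the supports of the elements of $\Phi$. A subset $\Phi\subseteq R^+$ is co-closed if its complement $\Phi^c=R^+\setminus\Phi$ is closed, i.e. $\alpha,\beta\in\Phi^c$ and $\alpha+\beta\in R$ imply $\alpha+\beta\in\Phi^c$. *)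

theory Defs
  imports "HOL-Analysis.Analysis"
begin

definition refl_vec :: "'a::euclidean_space \<Rightarrow> 'a \<Rightarrow> 'a" where
  "refl_vec a b = b - (2 * (b \<bullet> a) / (a \<bullet> a)) *\<^sub>R a"

definition root_system :: "'a::euclidean_space set \<Rightarrow> bool" where
  "root_system D \<longleftrightarrow> finite D \<and> 0 \<notin> D \<and> span D = UNIV
     \<and> (\<forall>a\<in>D. \<forall>c::real. c *\<^sub>R a \<in> D \<longrightarrow> c = 1 \<or> c = -1)
     \<and> (\<forall>a\<in>D. \<forall>b\<in>D. refl_vec a b \<in> D)
     \<and> (\<forall>a\<in>D. \<forall>b\<in>D. 2 * (b \<bullet> a) / (a \<bullet> a) \<in> \<int>)"

definition nonneg_int_comb :: "'a::real_vector set \<Rightarrow> 'a \<Rightarrow> bool" where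
  "nonneg_int_comb A x \<longleftrightarrow>
     (\<exists>c::'a \<Rightarrow> int. (\<forall>t\<in>A. c t \<ge> 0) \<and> x = (\<Sum>t\<in>A. of_int (c t) *\<^sub>R t))"

definition root_base :: "'a::euclidean_space set \<Rightarrow> 'a set \<Rightarrow> bool" where
  "root_base D B \<longleftrightarrow> B \<subseteq> D \<and> independent B \<and> span B = UNIV
     \<and> (\<forall>a\<in>D. nonneg_int_comb B a \<or> nonneg_int_comb B (- a))"

definition qproj :: "'a::euclidean_space set \<Rightarrow> 'a \<Rightarrow> 'a" where
  "qproj J x = closest_point (orthogonal_comp (span J)) x"

definition qrs :: "'a::euclidean_space set \<Rightarrow> 'a set \<Rightarrow> 'a set" where
  "qrs D J = qproj J ` D - {0}"

definition qrs_base :: "'a::euclidean_space set \<Rightarrow> 'a set \<Rightarrow> 'a set" where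
  "qrs_base B J = qproj J ` (B - J)"

definition pos_roots :: "'a::real_vector set \<Rightarrow> 'a set \<Rightarrow> 'a set" where
  "pos_roots R S = {a\<in>R. nonneg_int_comb S a}"

text \<open>Support of a root: elements of S with non-zero coefficient (S is linearly
  independent, so the integer coefficients are unique).\<close>
definition root_supp :: "'a::real_vector set \<Rightarrow> 'a \<Rightarrow> 'a set" where
  "root_supp S a = {t\<in>S. \<exists>c::'a \<Rightarrow> int. a = (\<Sum>s\<in>S. of_int (c s) *\<^sub>R s) \<and> c t \<noteq> 0}"

definition set_supp :: "'a::real_vector set \<Rightarrow> 'a set \<Rightarrow> 'a set" where
  "set_supp S P = (\<Union>a\<in>P. root_supp S a)"

definition co_closed :: "'a::real_vector set \<Rightarrow> 'a set \<Rightarrow> 'a set \<Rightarrow> bool" where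
  "co_closed R S P \<longleftrightarrow> P \<subseteq> pos_roots R S \<and>
     (\<forall>a\<in>pos_roots R S - P. \<forall>b\<in>pos_roots R S - P.
        a + b \<in> R \<longrightarrow> a + b \<in> pos_roots R S - P)"

definition int_span :: "'a::real_vector set \<Rightarrow> 'a set" where
  "int_span A = {x. \<exists>F (c::'a \<Rightarrow> int). finite F \<and> F \<subseteq> A \<and> x = (\<Sum>t\<in>F. of_int (c t) *\<^sub>R t)}"

end

theory Submission
  imports Defs
begin

text \<open>Only \<open>span\<^sub>\<int> (supp \<Phi>) \<subseteq> L = span\<^sub>\<int> \<Phi>\<close> needs an argument. Lift \<open>\<alpha> \<in> \<Phi>\<close> to a
  positive root \<open>x\<close> of \<open>\<Delta>\<close>, and call \<open>\<gamma>\<close> a summand of \<open>x\<close> if \<open>\<gamma>\<close> and \<open>x - \<gamma>\<close> are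
  positive roots. Since the complement of \<open>\<Phi>\<close> is closed, every summand of \<open>x\<close> projects
  into \<open>L\<close>. Removing a simple root \<open>\<theta>\<^sub>0\<close> with \<open>x \<bullet> \<theta>\<^sub>0 > 0\<close> leaves a positive root
  \<open>x - \<theta>\<^sub>0\<close>, and for each summand \<open>\<gamma>\<close> of \<open>x - \<theta>\<^sub>0\<close> an inner-product argument shows that
  \<open>\<gamma>\<close> or \<open>x - \<theta>\<^sub>0 - \<gamma>\<close> is a summand of \<open>x\<close>; so the summands of \<open>x - \<theta>\<^sub>0\<close> project into
  \<open>L\<close> as well. By induction on the height, every simple root in the support of \<open>x\<close> projects
  into \<open>L\<close>, and these projections form the support of \<open>\<alpha>\<close>.\<close>

section \<open>Root systems\<close>

lemma eq_if_inner_le_inner: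
  fixes x y :: "'a::real_inner"
  assumes "x \<bullet> x \<le> x \<bullet> y" and "y \<bullet> y \<le> x \<bullet> y"
  shows "x = y"
proof -
  have "(x - y) \<bullet> (x - y) \<le> 0"
    using assms by (simp add: inner_diff_left inner_diff_right inner_commute)
  then show ?thesis by (metis inner_gt_zero_iff not_le right_minus_eq)
qed

lemma exists_inner_pos_if_nonneg_combination:
  fixes x :: "'a::real_inner"
  assumes "x = (\<Sum>b\<in>B. f b *\<^sub>R b)" and "\<forall>b\<in>B. 0 \<le> f b" and "x \<noteq> 0"
  shows "\<exists>\<theta>\<in>B. 0 < f \<theta> \<and> 0 < x \<bullet> \<theta>"
proof (rule ccontr)
  assume "\<not> ?thesis"
  then have "\<forall>b\<in>B. f b * (x \<bullet> b) \<le> 0"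
    using assms(2) by (metis less_eq_real_def mult_nonneg_nonpos mult_zero_left not_le)
  then have "x \<bullet> x \<le> 0"
    by (subst (2) assms(1)) (simp add: inner_sum_right sum_nonpos)
  then show False using assms(3) by (metis inner_gt_zero_iff not_le)
qed

lemma root_system_refl_vec: "root_system D \<Longrightarrow> a \<in> D \<Longrightarrow> b \<in> D \<Longrightarrow> refl_vec a b \<in> D"
  by (simp add: root_system_def)

lemma root_system_neg:
  assumes "root_system D" and "a \<in> D"
  shows "- a \<in> D"
proof -
  have "a \<bullet> a \<noteq> 0" using assms by (auto simp: root_system_def)
  then have "refl_vec a a = - a" by (simp add: refl_vec_def scaleR_2)
  then show ?thesis using root_system_refl_vec[OF assms assms(2)] by simp
qed

lemma root_system_diff_if_inner_less:
  assumes D: "root_system D" and a: "a \<in> D" and b: "b \<in> D"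
    and "0 < a \<bullet> b" and "a \<bullet> b < b \<bullet> b"
  shows "a - b \<in> D"
proof -
  have "2 * (a \<bullet> b) / (b \<bullet> b) \<in> \<int>" using D a b by (simp add: root_system_def)
  then obtain k where k: "2 * (a \<bullet> b) / (b \<bullet> b) = of_int k" by (elim Ints_cases)
  moreover have "0 < 2 * (a \<bullet> b) / (b \<bullet> b)" and "2 * (a \<bullet> b) / (b \<bullet> b) < 2"
    using assms(4,5) by (auto simp: divide_less_eq zero_less_divide_iff)
  ultimately have "k = 1" by simp
  then have "refl_vec b a = a - b" unfolding refl_vec_def k by simp
  then show ?thesis using root_system_refl_vec[OF D b a] by simp
qed

text \<open>The Cartan integers of two distinct roots with positive inner product cannot both be at
  least 2, because then the square of their distance would be non-positive.\<close>
lemma root_system_diff: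
  assumes D: "root_system D" and a: "a \<in> D" and b: "b \<in> D"
    and pos: "0 < a \<bullet> b" and "a \<noteq> b"
  shows "a - b \<in> D"
proof -
  have "a \<bullet> b < a \<bullet> a \<or> a \<bullet> b < b \<bullet> b"
    using eq_if_inner_le_inner[of a b] \<open>a \<noteq> b\<close> by (meson not_le)
  then show ?thesis
  proof
    assume "a \<bullet> b < a \<bullet> a"
    then have "b - a \<in> D"
      using root_system_diff_if_inner_less[OF D b a] pos by (simp add: inner_commute)
    then show ?thesis using root_system_neg[OF D] by fastforce
  qed (use root_system_diff_if_inner_less[OF D a b] pos in simp)
qed

lemma root_system_add:
  assumes "root_system D" and "a \<in> D" and "b \<in> D" and "a \<bullet> b < 0" and "a + b \<noteq> 0"
  shows "a + b \<in> D"
  using root_system_diff[OF assms(1,2) root_system_neg[OF assms(1,3)]] assms(4,5)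
  by (auto simp: eq_neg_iff_add_eq_0)

text \<open>Otherwise \<open>\<gamma> \<bullet> \<theta>, \<delta> \<bullet> \<theta> \<ge> 0\<close> and \<open>x \<bullet> \<gamma>, x \<bullet> \<delta> \<le> 0\<close>, so that
  \<open>x \<bullet> x \<le> x \<bullet> \<theta>\<close> and \<open>\<theta> \<bullet> \<theta> \<le> x \<bullet> \<theta>\<close>, which forces \<open>x = \<theta>\<close>.\<close>
lemma root_system_add_of_sum3:
  assumes D: "root_system D" and x: "x \<in> D" and \<theta>: "\<theta> \<in> D" and \<gamma>: "\<gamma> \<in> D" and \<delta>: "\<delta> \<in> D"
    and x_eq: "x = \<gamma> + \<delta> + \<theta>" and pos: "0 < x \<bullet> \<theta>" and "x \<noteq> \<theta>"
    and \<gamma>\<theta>: "\<gamma> + \<theta> \<noteq> 0" and \<delta>\<theta>: "\<delta> + \<theta> \<noteq> 0"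
  shows "\<gamma> + \<theta> \<in> D \<or> \<delta> + \<theta> \<in> D"
proof (rule ccontr)
  assume none: "\<not> (\<gamma> + \<theta> \<in> D \<or> \<delta> + \<theta> \<in> D)"
  have "0 \<le> \<gamma> \<bullet> \<theta>" using root_system_add[OF D \<gamma> \<theta>] \<gamma>\<theta> none by fastforce
  moreover have "0 \<le> \<delta> \<bullet> \<theta>" using root_system_add[OF D \<delta> \<theta>] \<delta>\<theta> none by fastforce
  moreover have "x \<bullet> \<gamma> \<le> 0"
  proof -
    have "x - \<gamma> = \<delta> + \<theta>" using x_eq by simp
    then show ?thesis using root_system_diff[OF D x \<gamma>] \<delta>\<theta> none by fastforce
  qed
  moreover have "x \<bullet> \<delta> \<le> 0"
  proof -
    have "x - \<delta> = \<gamma> + \<theta>" using x_eq by simp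
    then show ?thesis using root_system_diff[OF D x \<delta>] \<gamma>\<theta> none by fastforce
  qed
  ultimately have "x \<bullet> x \<le> x \<bullet> \<theta>" and "\<theta> \<bullet> \<theta> \<le> x \<bullet> \<theta>"
    by (simp_all add: x_eq inner_add_left inner_add_right inner_commute)
  then show False using eq_if_inner_le_inner \<open>x \<noteq> \<theta>\<close> by blast
qed

section \<open>Coordinates with respect to an independent set\<close>

lemma representation_sum_image:
  fixes f :: "'b \<Rightarrow> 'a::real_vector"
  assumes "finite A" and "inj_on f A" and "independent (f ` A)" and "a \<in> A"
  shows "representation (f ` A) (\<Sum>b\<in>A. c b *\<^sub>R f b) (f a) = c a"
proof -
  have "representation (f ` A) (\<Sum>b\<in>A. c b *\<^sub>R f b) (f a)
      = (\<Sum>b\<in>A. c b * representation (f ` A) (f b) (f a))"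
    using assms(3)
    by (simp add: representation_sum representation_scale span_base span_scale)
  also have "\<dots> = (\<Sum>b\<in>A. if b = a then c b else 0)"
    using assms(2-4) by (intro sum.cong) (auto simp: representation_basis inj_on_eq_iff)
  also have "\<dots> = c a" using assms(1,4) by simp
  finally show ?thesis .
qed

lemma representation_sum_scaleR:
  fixes A :: "'a::real_vector set"
  assumes "finite A" and "independent A" and "a \<in> A"
  shows "representation A (\<Sum>b\<in>A. c b *\<^sub>R b) a = c a"
  using representation_sum_image[of A id] assms by simp

lemma nonneg_int_comb_add:
  assumes "nonneg_int_comb A x" and "nonneg_int_comb A y"
  shows "nonneg_int_comb A (x + y)"
proof -
  obtain c d where "\<forall>t\<in>A. 0 \<le> c t" "x = (\<Sum>t\<in>A. of_int (c t) *\<^sub>R t)"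
    and "\<forall>t\<in>A. 0 \<le> d t" "y = (\<Sum>t\<in>A. of_int (d t) *\<^sub>R t)"
    using assms unfolding nonneg_int_comb_def by blast
  then show ?thesis unfolding nonneg_int_comb_def
    by (intro exI[of _ "\<lambda>t. c t + d t"]) (simp add: sum.distrib scaleR_add_left)
qed

lemma representation_nonneg_if_nonneg_int_comb:
  assumes "finite A" and "independent A" and "nonneg_int_comb A x" and "a \<in> A"
  shows "0 \<le> representation A x a"
  using assms representation_sum_scaleR[OF assms(1,2,4)] unfolding nonneg_int_comb_def by force

lemma representation_neq_0_if_in_root_supp:
  assumes "finite S" and "independent S" and "t \<in> root_supp S a"
  shows "representation S a t \<noteq> 0"
  using assms representation_sum_scaleR[OF assms(1,2)] unfolding root_supp_def by force

lemma independent_span_Int_span_diff: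
  assumes "independent B" and "J \<subseteq> B"
  shows "span J \<inter> span (B - J) = {0}"
proof -
  have "x = 0" if J: "x \<in> span J" and BJ: "x \<in> span (B - J)" for x
  proof -
    have "representation B x = representation J x"
      using representation_extend[OF assms(1) J assms(2)] .
    moreover have "representation B x = representation (B - J) x"
      using representation_extend[OF assms(1) BJ] by blast
    ultimately have "representation B x = (\<lambda>b. 0)"
      using representation_ne_zero[of J x] representation_ne_zero[of "B - J" x] by fastforce
    then show "x = 0"
      using sum_nonzero_representation_eq[OF assms(1), of x] span_mono[OF assms(2)] J by auto
  qed
  then show ?thesis by (auto simp: span_zero)
qed

section \<open>Integer spans\<close>

lemma int_spanI:
  "finite F \<Longrightarrow> F \<subseteq> A \<Longrightarrow> x = (\<Sum>t\<in>F. of_int (c t) *\<^sub>R t) \<Longrightarrow> x \<in> int_span A"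
  unfolding int_span_def by blast

lemma int_span_superset: "A \<subseteq> int_span A"
proof
  fix x assume "x \<in> A"
  then show "x \<in> int_span A" by (intro int_spanI[of "{x}" _ _ "\<lambda>_. 1"]) auto
qed

lemma int_span_0: "0 \<in> int_span A"
  by (intro int_spanI[of "{}"]) auto

lemma int_span_mono: "A \<subseteq> B \<Longrightarrow> int_span A \<subseteq> int_span B"
  unfolding int_span_def by blast

lemma int_span_add:
  assumes "x \<in> int_span A" and "y \<in> int_span A"
  shows "x + y \<in> int_span A"
proof -
  obtain F c where F: "finite F" "F \<subseteq> A" "x = (\<Sum>t\<in>F. of_int (c t) *\<^sub>R t)"
    using assms(1) unfolding int_span_def by blast
  obtain G d where G: "finite G" "G \<subseteq> A" "y = (\<Sum>t\<in>G. of_int (d t) *\<^sub>R t)"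
    using assms(2) unfolding int_span_def by blast
  have extend: "(\<Sum>t\<in>H. of_int (e t) *\<^sub>R t) = (\<Sum>t\<in>F \<union> G. of_int (if t \<in> H then e t else 0) *\<^sub>R t)"
    if "H \<subseteq> F \<union> G" for H and e :: "'a \<Rightarrow> int"
    using F(1) G(1) that by (intro sum.mono_neutral_cong_left) auto
  have "x + y = (\<Sum>t\<in>F \<union> G. of_int ((if t \<in> F then c t else 0) + (if t \<in> G then d t else 0)) *\<^sub>R t)"
    using extend[of F c] extend[of G d] F(3) G(3) by (simp add: sum.distrib scaleR_add_left)
  then show ?thesis
    using F G by (intro int_spanI[of _ _ _ "\<lambda>t. (if t \<in> F then c t else 0) + (if t \<in> G then d t else 0)"]) auto
qed

lemma int_span_scaleR_of_int:
  assumes "x \<in> int_span A"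
  shows "of_int k *\<^sub>R x \<in> int_span A"
proof -
  obtain F c where "finite F" "F \<subseteq> A" "x = (\<Sum>t\<in>F. of_int (c t) *\<^sub>R t)"
    using assms unfolding int_span_def by blast
  then show ?thesis
    by (intro int_spanI[of F _ _ "\<lambda>t. k * c t"]) (auto simp: scaleR_sum_right)
qed

lemma int_span_diff: "x \<in> int_span A \<Longrightarrow> y \<in> int_span A \<Longrightarrow> x - y \<in> int_span A"
  using int_span_add int_span_scaleR_of_int[of y A "-1"] by fastforce

lemma int_span_subset_int_span:
  assumes "A \<subseteq> int_span B"
  shows "int_span A \<subseteq> int_span B"
proof
  fix x assume "x \<in> int_span A"
  then obtain F c where "finite F" "F \<subseteq> A" "x = (\<Sum>t\<in>F. of_int (c t) *\<^sub>R t)"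
    unfolding int_span_def by blast
  then show "x \<in> int_span B"
  proof (induction F arbitrary: x rule: finite_induct)
    case empty then show ?case by (simp add: int_span_0)
  next
    case (insert t F)
    then show ?case using assms by (auto intro!: int_span_add int_span_scaleR_of_int)
  qed
qed

lemma in_int_span_root_supp:
  assumes "finite S" and "a = (\<Sum>t\<in>S. of_int (c t) *\<^sub>R t)"
  shows "a \<in> int_span (root_supp S a)"
proof (rule int_spanI)
  show "finite {t \<in> S. c t \<noteq> 0}" using assms(1) by simp
  show "{t \<in> S. c t \<noteq> 0} \<subseteq> root_supp S a" using assms(2) unfolding root_supp_def by blast
  show "a = (\<Sum>t\<in>{t \<in> S. c t \<noteq> 0}. of_int (c t) *\<^sub>R t)"
    unfolding assms(2) using assms(1) by (intro sum.mono_neutral_cong_right) auto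
qed

section \<open>Orthogonal projection\<close>

lemma qproj_eq:
  fixes J :: "'a::euclidean_space set"
  assumes u: "u \<in> span J" and w: "w \<in> orthogonal_comp (span J)"
  shows "qproj J (u + w) = w"
  unfolding qproj_def
proof (rule closest_point_unique[symmetric])
  let ?W = "orthogonal_comp (span J)"
  show "convex ?W" and "closed ?W"
    by (simp_all add: subspace_orthogonal_comp subspace_imp_convex closed_subspace)
  show "w \<in> ?W" by (fact w)
  show "\<forall>z\<in>?W. dist (u + w) w \<le> dist (u + w) z"
  proof
    fix z assume "z \<in> ?W"
    then have "w - z \<in> ?W" using w by (simp add: subspace_diff subspace_orthogonal_comp)
    then have "orthogonal u (w - z)" using u by (simp add: orthogonal_comp_def)
    then have "(norm u)\<^sup>2 \<le> (norm (u + (w - z)))\<^sup>2" using norm_add_Pythagorean by fastforce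
    then have "norm u \<le> norm (u + (w - z))" using power2_le_imp_le norm_ge_zero by blast
    then show "dist (u + w) w \<le> dist (u + w) z" by (simp add: dist_norm add_diff_eq)
  qed
qed

lemma qproj_decompose:
  fixes J :: "'a::euclidean_space set"
  obtains u where "u \<in> span J" and "x = u + qproj J x" and "qproj J x \<in> orthogonal_comp (span J)"
proof -
  obtain u w where "u \<in> span J" "w \<in> orthogonal_comp (span J)" "x = u + w"
    using subspace_sum_orthogonal_comp[of "span J"] set_plus_elim by (metis UNIV_I subspace_span)
  then show ?thesis using qproj_eq that by metis
qed

lemma linear_qproj: "linear (qproj (J :: 'a::euclidean_space set))"
proof (rule linearI)
  let ?W = "orthogonal_comp (span J)"
  fix x y :: 'a and c :: real
  obtain u where u: "u \<in> span J" "x = u + qproj J x" "qproj J x \<in> ?W"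
    by (rule qproj_decompose)
  obtain v where v: "v \<in> span J" "y = v + qproj J y" "qproj J y \<in> ?W"
    by (rule qproj_decompose)
  have "x + y = (u + v) + (qproj J x + qproj J y)" using u v by (simp add: algebra_simps)
  moreover have "u + v \<in> span J" using u v by (simp add: span_add)
  moreover have "qproj J x + qproj J y \<in> ?W" using u v by (simp add: subspace_add subspace_orthogonal_comp)
  ultimately show "qproj J (x + y) = qproj J x + qproj J y" by (metis qproj_eq)
  have "c *\<^sub>R x = c *\<^sub>R u + c *\<^sub>R qproj J x" using u by (metis scaleR_right_distrib)
  moreover have "c *\<^sub>R u \<in> span J" using u by (simp add: span_mul)
  moreover have "c *\<^sub>R qproj J x \<in> ?W" using u by (simp add: subspace_mul subspace_orthogonal_comp)
  ultimately show "qproj J (c *\<^sub>R x) = c *\<^sub>R qproj J x" by (metis qproj_eq)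
qed

lemma qproj_add: "qproj J (x + y) = qproj J x + qproj J (y :: 'a::euclidean_space)"
  using linear_qproj by (rule linear_add)

lemma qproj_eq_0_iff: "qproj J x = 0 \<longleftrightarrow> x \<in> span (J :: 'a::euclidean_space set)"
proof
  show "qproj J x = 0 \<Longrightarrow> x \<in> span J" by (metis qproj_decompose add.right_neutral)
  show "x \<in> span J \<Longrightarrow> qproj J x = 0"
    using qproj_eq[of x J 0] by (simp add: subspace_0 subspace_orthogonal_comp)
qed

section \<open>Positive roots and heights\<close>

locale based_root_system =
  fixes D B :: "'a::euclidean_space set"
  assumes root_system: "root_system D" and root_base: "root_base D B"
begin

lemma base_subset: "B \<subseteq> D"
  using root_base by (simp add: root_base_def)

lemma independent_base: "independent B"
  using root_base by (simp add: root_base_def)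

lemma finite_base: "finite B"
  using independent_base by (simp add: finiteI_independent)

lemma sum_representation_base: "(\<Sum>b\<in>B. representation B x b *\<^sub>R b) = x"
  using root_base by (intro sum_representation_eq) (auto simp: root_base_def finite_base)

lemma representation_diff_simple_root:
  assumes "\<theta> \<in> B"
  shows "representation B (x - \<theta>) b = representation B x b - (if b = \<theta> then 1 else 0)"
  using root_base assms
  by (simp add: root_base_def representation_diff representation_basis span_base)

definition height :: "'a \<Rightarrow> real" where
  "height x = (\<Sum>b\<in>B. representation B x b)"

lemma height_diff_simple_root: "\<theta> \<in> B \<Longrightarrow> height (x - \<theta>) = height x - 1"
  by (simp add: height_def representation_diff_simple_root sum_subtractf finite_base)

lemma representation_pos_root_nonneg:
  "x \<in> pos_roots D B \<Longrightarrow> b \<in> B \<Longrightarrow> 0 \<le> representation B x b"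
  unfolding pos_roots_def
  using representation_nonneg_if_nonneg_int_comb finite_base independent_base by blast

lemma height_nonneg: "x \<in> pos_roots D B \<Longrightarrow> 0 \<le> height x"
  unfolding height_def by (simp add: representation_pos_root_nonneg sum_nonneg)

lemma pos_root_nonzero: "x \<in> pos_roots D B \<Longrightarrow> x \<noteq> 0"
  using root_system by (auto simp: pos_roots_def root_system_def)

lemma simple_root_pos:
  assumes "\<theta> \<in> B"
  shows "\<theta> \<in> pos_roots D B"
proof -
  have "(\<Sum>t\<in>B. of_int (if t = \<theta> then 1 else 0) *\<^sub>R t) = (\<Sum>t\<in>B. if t = \<theta> then t else 0)"
    by (rule sum.cong) auto
  also have "\<dots> = \<theta>" using assms finite_base by simp
  finally have "(\<Sum>t\<in>B. of_int (if t = \<theta> then 1 else 0) *\<^sub>R t) = \<theta>" .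
  then have "nonneg_int_comb B \<theta>"
    unfolding nonneg_int_comb_def by (intro exI[of _ "\<lambda>t. if t = \<theta> then 1 else 0"]) auto
  then show ?thesis using assms base_subset by (auto simp: pos_roots_def)
qed

lemma pos_root_add:
  "x \<in> pos_roots D B \<Longrightarrow> y \<in> pos_roots D B \<Longrightarrow> x + y \<in> D \<Longrightarrow> x + y \<in> pos_roots D B"
  by (simp add: pos_roots_def nonneg_int_comb_add)

lemma pos_root_add_nonzero:
  assumes x: "x \<in> pos_roots D B" and y: "y \<in> pos_roots D B"
  shows "x + y \<noteq> 0"
proof
  assume "x + y = 0"
  then have "y = - x" by (metis add.commute eq_neg_iff_add_eq_0)
  then have "representation B x b = 0" if "b \<in> B" for b
    using representation_pos_root_nonneg[OF x that] representation_pos_root_nonneg[OF y that]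
      representation_neg[OF independent_base, of x] root_base
    by (simp add: root_base_def)
  then have "x = 0" using sum_representation_base[of x] by simp
  then show False using pos_root_nonzero[OF x] by simp
qed

lemma pos_root_diff_simple_root:
  assumes x: "x \<in> pos_roots D B" and \<theta>: "\<theta> \<in> B" and "0 < x \<bullet> \<theta>" and "x \<noteq> \<theta>"
  shows "x - \<theta> \<in> pos_roots D B"
proof (rule ccontr)
  have xD: "x \<in> D" and \<theta>D: "\<theta> \<in> D" using x \<theta> base_subset by (auto simp: pos_roots_def)
  have diff: "x - \<theta> \<in> D" using root_system_diff[OF root_system xD \<theta>D] assms(3,4) .
  assume "x - \<theta> \<notin> pos_roots D B"
  then have "nonneg_int_comb B (\<theta> - x)"
    using root_base diff by (auto simp: root_base_def pos_roots_def)
  then have "0 \<le> representation B (\<theta> - x) b" if "b \<in> B" for b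
    using representation_nonneg_if_nonneg_int_comb finite_base independent_base that by blast
  then have "representation B x b = 0" if "b \<in> B" "b \<noteq> \<theta>" for b
    using that representation_diff_simple_root[OF \<theta>, of x] representation_pos_root_nonneg[OF x]
      representation_neg[OF independent_base, of "x - \<theta>"] root_base
    by (fastforce simp: root_base_def)
  then have "(\<Sum>b\<in>B. representation B x b *\<^sub>R b)
      = (\<Sum>b\<in>B. if b = \<theta> then representation B x \<theta> *\<^sub>R \<theta> else 0)"
    by (intro sum.cong) auto
  then have x_eq: "x = representation B x \<theta> *\<^sub>R \<theta>"
    using sum_representation_base[of x] \<theta> finite_base by simp
  have "\<forall>c. c *\<^sub>R \<theta> \<in> D \<longrightarrow> c = 1 \<or> c = -1"
    using root_system \<theta>D unfolding root_system_def by blast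
  then have "representation B x \<theta> = 1"
    using xD x_eq representation_pos_root_nonneg[OF x \<theta>] by force
  with x_eq \<open>x \<noteq> \<theta>\<close> show False by simp
qed

lemma exists_simple_root_inner_pos:
  assumes "x \<in> pos_roots D B"
  obtains \<theta> where "\<theta> \<in> B" and "0 < x \<bullet> \<theta>"
  using exists_inner_pos_if_nonneg_combination[OF sum_representation_base[symmetric]]
    representation_pos_root_nonneg[OF assms] pos_root_nonzero[OF assms] that
  by blast

definition summands :: "'a \<Rightarrow> 'a set" where
  "summands x = {\<gamma> \<in> pos_roots D B. x - \<gamma> \<in> pos_roots D B}"

lemma summands_diff_simple_root:
  assumes x: "x \<in> pos_roots D B" and \<theta>: "\<theta> \<in> B" and "0 < x \<bullet> \<theta>" and "x \<noteq> \<theta>"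
    and \<gamma>: "\<gamma> \<in> summands (x - \<theta>)"
  shows "\<gamma> \<in> summands x \<or> x - \<theta> - \<gamma> \<in> summands x"
proof -
  have \<theta>_pos: "\<theta> \<in> pos_roots D B" using simple_root_pos[OF \<theta>] .
  have \<gamma>_pos: "\<gamma> \<in> pos_roots D B" and \<delta>_pos: "x - \<theta> - \<gamma> \<in> pos_roots D B"
    using \<gamma> by (simp_all add: summands_def)
  have "\<gamma> + \<theta> \<in> D \<or> (x - \<theta> - \<gamma>) + \<theta> \<in> D"
    using assms \<theta>_pos \<gamma>_pos \<delta>_pos
      pos_root_add_nonzero[OF \<gamma>_pos \<theta>_pos] pos_root_add_nonzero[OF \<delta>_pos \<theta>_pos]
    by (intro root_system_add_of_sum3[OF root_system, of x]) (simp_all add: pos_roots_def)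
  then show ?thesis
    using pos_root_add[OF \<gamma>_pos \<theta>_pos] pos_root_add[OF \<delta>_pos \<theta>_pos] \<gamma>_pos \<delta>_pos
    by (auto simp: summands_def algebra_simps)
qed

lemma image_summands_diff_simple_root_subset:
  fixes h :: "'a \<Rightarrow> 'b::ab_group_add"
  assumes diff_closed: "\<And>u v. u \<in> L \<Longrightarrow> v \<in> L \<Longrightarrow> u - v \<in> L"
    and additive: "\<And>u v. h (u + v) = h u + h v"
    and x: "x \<in> pos_roots D B" and \<theta>: "\<theta> \<in> B" and "0 < x \<bullet> \<theta>" and "x \<noteq> \<theta>"
    and summands_x: "h ` summands x \<subseteq> L"
  shows "h ` summands (x - \<theta>) \<subseteq> L"
proof (rule image_subsetI)
  fix \<gamma> assume \<gamma>: "\<gamma> \<in> summands (x - \<theta>)"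
  have "x - \<theta> \<in> summands x"
    using pos_root_diff_simple_root[OF assms(3-6)] simple_root_pos[OF \<theta>] by (simp add: summands_def)
  then have "h (x - \<theta>) \<in> L" using summands_x by blast
  moreover have "h (x - \<theta>) = h \<gamma> + h (x - \<theta> - \<gamma>)" using additive[of \<gamma> "x - \<theta> - \<gamma>"] by simp
  ultimately show "h \<gamma> \<in> L"
    using summands_diff_simple_root[OF assms(3-6) \<gamma>] summands_x diff_closed by (metis add_diff_cancel image_subset_iff)
qed

lemma simple_root_in_subgroup:
  fixes h :: "'a \<Rightarrow> 'b::ab_group_add"
  assumes diff_closed: "\<And>u v. u \<in> L \<Longrightarrow> v \<in> L \<Longrightarrow> u - v \<in> L"
    and additive: "\<And>u v. h (u + v) = h u + h v"
    and "x \<in> pos_roots D B" and "h x \<in> L" and "h ` summands x \<subseteq> L"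
    and "\<theta> \<in> B" and "representation B x \<theta> \<noteq> 0"
  shows "h \<theta> \<in> L"
  using assms(3-)
proof (induction "nat \<lfloor>height x\<rfloor>" arbitrary: x rule: less_induct)
  case less
  note x = \<open>x \<in> pos_roots D B\<close> and summands_x = \<open>h ` summands x \<subseteq> L\<close>
  obtain \<theta>\<^sub>0 where \<theta>\<^sub>0: "\<theta>\<^sub>0 \<in> B" "0 < x \<bullet> \<theta>\<^sub>0" using exists_simple_root_inner_pos[OF x] .
  show ?case
  proof (cases "x = \<theta>\<^sub>0")
    case True
    then have "\<theta> = \<theta>\<^sub>0"
      using \<open>representation B x \<theta> \<noteq> 0\<close> independent_base \<theta>\<^sub>0(1)
      by (auto simp: representation_basis split: if_splits)
    then show ?thesis using True \<open>h x \<in> L\<close> by simp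
  next
    case x_ne: False
    have \<beta>: "x - \<theta>\<^sub>0 \<in> pos_roots D B" using pos_root_diff_simple_root[OF x \<theta>\<^sub>0 x_ne] .
    then have summands: "x - \<theta>\<^sub>0 \<in> summands x" "\<theta>\<^sub>0 \<in> summands x"
      using simple_root_pos[OF \<theta>\<^sub>0(1)] by (simp_all add: summands_def)
    show ?thesis
    proof (cases "\<theta> = \<theta>\<^sub>0")
      case True
      then show ?thesis using summands(2) summands_x by blast
    next
      case False
      then have "representation B (x - \<theta>\<^sub>0) \<theta> \<noteq> 0"
        using \<open>representation B x \<theta> \<noteq> 0\<close> representation_diff_simple_root[OF \<theta>\<^sub>0(1)] by simp
      moreover have "nat \<lfloor>height (x - \<theta>\<^sub>0)\<rfloor> < nat \<lfloor>height x\<rfloor>"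
        using height_diff_simple_root[OF \<theta>\<^sub>0(1), of x] height_nonneg[OF \<beta>] by linarith
      moreover have "h (x - \<theta>\<^sub>0) \<in> L" using summands(1) summands_x by blast
      moreover have "h ` summands (x - \<theta>\<^sub>0) \<subseteq> L"
        using image_summands_diff_simple_root_subset[OF diff_closed additive x \<theta>\<^sub>0 x_ne summands_x] .
      ultimately show ?thesis using less.hyps \<beta> \<open>\<theta> \<in> B\<close> by blast
    qed
  qed
qed

end

section \<open>The quotient root system\<close>

locale quotient_root_system = based_root_system +
  fixes J :: "'a set"
  assumes J_subset: "J \<subseteq> B"
begin

lemma inj_on_qproj_span: "inj_on (qproj J) (span (B - J))"
  using independent_span_Int_span_diff[OF independent_base J_subset]
  by (auto simp: linear_inj_on_iff_eq_0[OF linear_qproj subspace_span] qproj_eq_0_iff)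

lemma inj_on_qproj: "inj_on (qproj J) (B - J)"
  using inj_on_qproj_span by (rule inj_on_subset) (rule span_superset)

lemma independent_qrs_base: "independent (qrs_base B J)"
  unfolding qrs_base_def
  using linear_independent_injective_image[OF linear_qproj _ inj_on_qproj_span] independent_base
  by (simp add: independent_mono)

lemma finite_qrs_base: "finite (qrs_base B J)"
  by (simp add: qrs_base_def finite_base)

lemma qproj_expansion: "qproj J x = (\<Sum>b\<in>B - J. representation B x b *\<^sub>R qproj J b)"
proof -
  have "qproj J x = (\<Sum>b\<in>B. representation B x b *\<^sub>R qproj J b)"
    using sum_representation_base[of x] linear_qproj
    by (metis (no_types, lifting) linear_scale linear_sum sum.cong)
  also have "\<dots> = (\<Sum>b\<in>B - J. representation B x b *\<^sub>R qproj J b)"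
    using finite_base J_subset by (intro sum.mono_neutral_right) (auto simp: qproj_eq_0_iff span_base)
  finally show ?thesis .
qed

lemma representation_qproj:
  assumes "\<theta> \<in> B - J"
  shows "representation (qrs_base B J) (qproj J x) (qproj J \<theta>) = representation B x \<theta>"
  unfolding qrs_base_def qproj_expansion[of x]
  using finite_base inj_on_qproj independent_qrs_base assms
  by (intro representation_sum_image) (auto simp: qrs_base_def)

lemma nonneg_int_comb_qproj:
  assumes "nonneg_int_comb B x"
  shows "nonneg_int_comb (qrs_base B J) (qproj J x)"
proof -
  obtain c where c: "\<forall>b\<in>B. 0 \<le> c b" "x = (\<Sum>b\<in>B. of_int (c b) *\<^sub>R b)"
    using assms unfolding nonneg_int_comb_def by blast
  define c' where "c' s = c (inv_into (B - J) (qproj J) s)" for s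
  have "representation B x b = of_int (c b)" if "b \<in> B" for b
    using c(2) representation_sum_scaleR[OF finite_base independent_base that] by simp
  then have "qproj J x = (\<Sum>b\<in>B - J. of_int (c' (qproj J b)) *\<^sub>R qproj J b)"
    using qproj_expansion[of x] inj_on_qproj by (simp add: c'_def)
  also have "\<dots> = (\<Sum>s\<in>qrs_base B J. of_int (c' s) *\<^sub>R s)"
    unfolding qrs_base_def using sum.reindex[OF inj_on_qproj]
    by (metis (no_types, lifting) comp_apply sum.cong)
  finally show ?thesis
    unfolding nonneg_int_comb_def using c(1)
    by (auto simp: c'_def qrs_base_def inv_into_f_f[OF inj_on_qproj] intro!: exI[of _ c'])
qed

lemma qproj_pos_root:
  assumes "\<gamma> \<in> pos_roots D B" and "qproj J \<gamma> \<noteq> 0"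
  shows "qproj J \<gamma> \<in> pos_roots (qrs D J) (qrs_base B J)"
  using assms nonneg_int_comb_qproj by (auto simp: pos_roots_def qrs_def)

lemma pos_root_if_qproj_pos_root:
  assumes x: "x \<in> D" and \<alpha>: "qproj J x \<in> pos_roots (qrs D J) (qrs_base B J)"
  shows "x \<in> pos_roots D B"
proof (rule ccontr)
  assume "x \<notin> pos_roots D B"
  then have "nonneg_int_comb B (- x)" using root_base x by (auto simp: root_base_def pos_roots_def)
  then have "0 \<le> representation B (- x) b" if "b \<in> B" for b
    using representation_nonneg_if_nonneg_int_comb finite_base independent_base that by blast
  moreover have "0 \<le> representation B x b" if "b \<in> B - J" for b
    using \<alpha> that representation_qproj[OF that, of x] finite_qrs_base independent_qrs_base
      representation_nonneg_if_nonneg_int_comb[of "qrs_base B J" "qproj J x" "qproj J b"]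
    by (auto simp: pos_roots_def qrs_base_def)
  ultimately have "representation B x b = 0" if "b \<in> B - J" for b
    using that representation_neg[OF independent_base, of x] root_base
    by (fastforce simp: root_base_def)
  then have "qproj J x = 0" by (simp add: qproj_expansion[of x])
  then show False using \<alpha> by (simp add: pos_roots_def qrs_def)
qed

lemma root_supp_qproj:
  assumes "t \<in> root_supp (qrs_base B J) (qproj J x)"
  obtains \<theta> where "\<theta> \<in> B - J" and "t = qproj J \<theta>" and "representation B x \<theta> \<noteq> 0"
proof -
  obtain \<theta> where \<theta>: "\<theta> \<in> B - J" "t = qproj J \<theta>"
    using assms by (auto simp: root_supp_def qrs_base_def)
  then have "representation B x \<theta> \<noteq> 0"
    using representation_neq_0_if_in_root_supp[OF finite_qrs_base independent_qrs_base assms]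
      representation_qproj by simp
  with \<theta> that show ?thesis by blast
qed

text \<open>If neither \<open>qproj J \<gamma>\<close> nor \<open>qproj J (x - \<gamma>)\<close> were zero or in \<open>P\<close>, closedness of
  the complement of \<open>P\<close> would exclude their sum \<open>qproj J x\<close> from \<open>P\<close>.\<close>
lemma qproj_summand_in_int_span:
  assumes P: "co_closed (qrs D J) (qrs_base B J) P" and x: "qproj J x \<in> P"
    and \<gamma>: "\<gamma> \<in> summands x"
  shows "qproj J \<gamma> \<in> int_span P"
proof -
  have sum: "qproj J x = qproj J \<gamma> + qproj J (x - \<gamma>)"
    using qproj_add[of J \<gamma> "x - \<gamma>"] by simp
  have "qproj J x \<in> qrs D J" using P x by (auto simp: co_closed_def pos_roots_def)
  consider "qproj J \<gamma> = 0" | "qproj J (x - \<gamma>) = 0" | "qproj J \<gamma> \<in> P" | "qproj J (x - \<gamma>) \<in> P"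
    using P x sum \<open>qproj J x \<in> qrs D J\<close> \<gamma> qproj_pos_root
    unfolding co_closed_def summands_def by fastforce
  then show ?thesis
  proof cases
    case 1
    then show ?thesis by (simp add: int_span_0)
  next
    case 2
    then show ?thesis using x sum int_span_superset by auto
  next
    case 3
    then show ?thesis using int_span_superset by auto
  next
    case 4
    then have "qproj J x - qproj J (x - \<gamma>) \<in> int_span P"
      using x int_span_superset int_span_diff by blast
    then show ?thesis using sum by simp
  qed
qed

lemma root_supp_subset_int_span:
  assumes P: "co_closed (qrs D J) (qrs_base B J) P" and "\<alpha> \<in> P"
  shows "root_supp (qrs_base B J) \<alpha> \<subseteq> int_span P"
proof
  fix t assume t: "t \<in> root_supp (qrs_base B J) \<alpha>"
  have \<alpha>: "\<alpha> \<in> pos_roots (qrs D J) (qrs_base B J)" using P \<open>\<alpha> \<in> P\<close> by (auto simp: co_closed_def)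
  then obtain x where x: "x \<in> D" "\<alpha> = qproj J x" by (auto simp: pos_roots_def qrs_def)
  with \<alpha> have x_pos: "x \<in> pos_roots D B" using pos_root_if_qproj_pos_root by blast
  obtain \<theta> where "\<theta> \<in> B - J" "t = qproj J \<theta>" "representation B x \<theta> \<noteq> 0"
    using root_supp_qproj t x(2) by blast
  moreover have "qproj J \<theta> \<in> int_span P"
  proof (rule simple_root_in_subgroup[OF int_span_diff qproj_add x_pos])
    show "qproj J x \<in> int_span P" using x(2) \<open>\<alpha> \<in> P\<close> int_span_superset by blast
    show "qproj J ` summands x \<subseteq> int_span P"
      using qproj_summand_in_int_span[OF P] x(2) \<open>\<alpha> \<in> P\<close> by blast
  qed (use calculation in auto)
  ultimately show "t \<in> int_span P" by simp
qed

end

theorem proposition2p14: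
  fixes D B J P :: "'a::euclidean_space set"
  assumes "root_system D"
    and "root_base D B"
    and "J \<subset> B"
    and "co_closed (qrs D J) (qrs_base B J) P"
  shows "int_span P = int_span (set_supp (qrs_base B J) P)"
proof
  interpret quotient_root_system D B J using assms(1-3) by unfold_locales auto
  show "int_span P \<subseteq> int_span (set_supp (qrs_base B J) P)"
  proof (rule int_span_subset_int_span, rule subsetI)
    fix \<alpha> assume "\<alpha> \<in> P"
    then obtain c where "\<alpha> = (\<Sum>t\<in>qrs_base B J. of_int (c t) *\<^sub>R t)"
      using assms(4) by (auto simp: co_closed_def pos_roots_def nonneg_int_comb_def)
    then have "\<alpha> \<in> int_span (root_supp (qrs_base B J) \<alpha>)"
      using in_int_span_root_supp finite_qrs_base by blast
    moreover have "root_supp (qrs_base B J) \<alpha> \<subseteq> set_supp (qrs_base B J) P"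
      using \<open>\<alpha> \<in> P\<close> by (auto simp: set_supp_def)
    ultimately show "\<alpha> \<in> int_span (set_supp (qrs_base B J) P)"
      using int_span_mono by blast
  qed
  show "int_span (set_supp (qrs_base B J) P) \<subseteq> int_span P"
    using root_supp_subset_int_span[OF assms(4)]
    by (intro int_span_subset_int_span) (auto simp: set_supp_def)
qed

end
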